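(* Let $k$ be a field of characteristic $p>0$, $m,n\ge1$, and let $G=\ker(F^n:W_m\to W_m)$, with Hopf algebra $R=k[x_0,\dots,x_{m-1}]/(x_0^{p^n},\dots,x_{m-1}^{p^n})$. For $0\le i\le m$ let $G_i\subseteq G$ be the closed subgroup scheme defined by the ideal $(x_0,\dots,x_{m-i-1})$ (so $G_0=0$, $G_m=G$; $G_i$ is the image of $\ker(F^n:W_i\to W_i)$ under $V^{m-i}$). Let $M$ be a finite-dimensional $R$-comodule with comodule map $c_M$, let $1\le i\le m$, and let $v_{i-1}\in M^{G_{i-1}}\setminus\{0\}$. Let $R_i\subseteq R$ be the subalgebra generated by $x_0,\dots,x_{m-i}$. Then: (1) $c_M(v_{i-1})\in M\otimes R_i$; (2) expand $c_M(v_{i-1})$ in the monomial basis of $R_i$ and let $v_i\otimes x_{m-i}^j$ be the nonzero term whose monomial involves only $x_{m-i}$ (including the constant monomial $x_{m-i}^0$) with $j$ maximal. Then $v_i\in M^{G_i}\setminus\{0\}$.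
   Context: $W_m$ denotes truncated Witt vectors of length $m$ over $k$, $F$ the relative Frobenius $(a_\nu)\mapsto(a_\nu^p)$, $V$ the Verschiebung $(a_0,\dots,a_{m-1})\mapsto(0,a_0,\dots,a_{m-2})$. The comultiplication of $R$ is given by Witt vector addition. An $R$-comodule is a $k$-vector space $M$ with $c_M:M\to M\otimes_kR$ satisfying coassociativity and the counit axiom (equivalently a representation of $G$); for a closed subgroup $H\subseteq G$ with Hopf algebra $R/I$, $M^H=\{w\in M:(\mathrm{id}\otimes\mathrm{pr})c_M(w)=w\otimes1\in M\otimes R/I\}$. *)

theory Defs
  imports Complex_Main "HOL-Computational_Algebra.Primes" "HOL-Library.Poly_Mapping"
begin

text \<open>A polynomial in the variables indexed by nat with coefficients in 'a is a
finitely supported map from monomials (exponent vectors nat =>0 nat) to 'a.\<close>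

type_synonym 'a mpoly = "(nat \<Rightarrow>\<^sub>0 nat) \<Rightarrow>\<^sub>0 'a"

definition mp_var :: "nat \<Rightarrow> 'a::comm_ring_1 mpoly" where
  "mp_var i = Poly_Mapping.single (Poly_Mapping.single i 1) 1"

text \<open>Witt addition polynomials S_nu(X,Y) over the integers; the variable X_i is
encoded as variable number 2i and Y_i as variable number 2i+1.\<close>

definition witt_X :: "nat \<Rightarrow> int mpoly" where "witt_X i = mp_var (2 * i)"
definition witt_Y :: "nat \<Rightarrow> int mpoly" where "witt_Y i = mp_var (2 * i + 1)"

definition mp_cdiv :: "int \<Rightarrow> int mpoly \<Rightarrow> int mpoly" where
  "mp_cdiv d P = Poly_Mapping.map (\<lambda>c. c div d) P"

text \<open>witt_add_list p nu = [S_0, ..., S_(nu-1)], defined by the recursion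
  sum_(i<=nu) p^i S_i^(p^(nu-i)) = sum_(i<=nu) p^i (X_i^(p^(nu-i)) + Y_i^(p^(nu-i))).\<close>
primrec witt_add_list :: "nat \<Rightarrow> nat \<Rightarrow> int mpoly list" where
  "witt_add_list p 0 = []"
| "witt_add_list p (Suc nu) =
     (let L = witt_add_list p nu in
      L @ [mp_cdiv (int p ^ nu)
             ((\<Sum>i\<le>nu. of_nat (p ^ i) * (witt_X i ^ (p ^ (nu - i)) + witt_Y i ^ (p ^ (nu - i))))
              - (\<Sum>i<nu. of_nat (p ^ i) * (L ! i) ^ (p ^ (nu - i))))])"

definition witt_add :: "nat \<Rightarrow> nat \<Rightarrow> int mpoly" where
  "witt_add p nu = witt_add_list p (Suc nu) ! nu"

definition std_mono :: "nat \<Rightarrow> nat \<Rightarrow> (nat \<Rightarrow>\<^sub>0 nat) \<Rightarrow> bool" where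
  "std_mono m N a \<longleftrightarrow> (\<forall>i. Poly_Mapping.lookup a i \<noteq> 0 \<longrightarrow> i < m) \<and> (\<forall>i. Poly_Mapping.lookup a i < N)"

text \<open>The monomial x^c (x) x^b of R (x) R, encoded in the variables X_i = 2i
(first tensor factor) and Y_i = 2i+1 (second tensor factor).\<close>
definition tensor_mono :: "nat \<Rightarrow> (nat \<Rightarrow>\<^sub>0 nat) \<Rightarrow> (nat \<Rightarrow>\<^sub>0 nat) \<Rightarrow> (nat \<Rightarrow>\<^sub>0 nat)" where
  "tensor_mono m c b =
     (\<Sum>i<m. Poly_Mapping.single (2 * i) (Poly_Mapping.lookup c i) + Poly_Mapping.single (2 * i + 1) (Poly_Mapping.lookup b i))"

text \<open>Comultiplication: Delta(x_nu) = S_nu(x (x) 1, 1 (x) x) (Witt vector addition,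
coefficients reduced into k), extended multiplicatively. delta_coeff p m a mu is the
coefficient of the bi-monomial mu in Delta(x^a). Since the defining ideal of R (x) R is a
monomial ideal, the coefficient at a standard bi-monomial does not depend on whether the
product is reduced before or after multiplying.\<close>
definition delta_coeff :: "nat \<Rightarrow> nat \<Rightarrow> (nat \<Rightarrow>\<^sub>0 nat) \<Rightarrow> (nat \<Rightarrow>\<^sub>0 nat) \<Rightarrow> 'k::field" where
  "delta_coeff p m a mu =
     Poly_Mapping.lookup (\<Prod>nu<m. (Poly_Mapping.map (of_int :: int \<Rightarrow> 'k) (witt_add p nu)) ^ Poly_Mapping.lookup a nu) mu"

text \<open>An element of M (x) R is represented by its coordinates w.r.t. the standard
monomial basis of R: a map from exponent vectors to M vanishing off standard monomials.\<close>
definition is_comodule ::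
  "('k::field \<Rightarrow> 'm::ab_group_add \<Rightarrow> 'm) \<Rightarrow> nat \<Rightarrow> nat \<Rightarrow> nat \<Rightarrow> ('m \<Rightarrow> (nat \<Rightarrow>\<^sub>0 nat) \<Rightarrow> 'm) \<Rightarrow> bool"
where
  "is_comodule scale p n m cM \<longleftrightarrow>
     \<comment> \<open>values lie in M (x) R\<close>
     (\<forall>v a. \<not> std_mono m (p ^ n) a \<longrightarrow> cM v a = 0) \<and>
     \<comment> \<open>k-linearity\<close>
     (\<forall>u v a. cM (u + v) a = cM u a + cM v a) \<and>
     (\<forall>c v a. cM (scale c v) a = scale c (cM v a)) \<and>
     \<comment> \<open>counit axiom (id (x) eps) cM = id, eps(x_i) = 0\<close>
     (\<forall>v. cM v 0 = v) \<and>
     \<comment> \<open>coassociativity (cM (x) id) cM = (id (x) Delta) cM, compared at x^c (x) x^b\<close>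
     (\<forall>v b c. std_mono m (p ^ n) b \<longrightarrow> std_mono m (p ^ n) c \<longrightarrow>
        cM (cM v b) c =
          (\<Sum>a\<in>{a. std_mono m (p ^ n) a}. scale (delta_coeff p m a (tensor_mono m c b)) (cM v a)))"

text \<open>Invariants under G_i, the closed subgroup defined by the ideal
I = (x_0, ..., x_(m-i-1)). The projection R -> R/I kills exactly the standard
monomials involving some x_j with j < m-i, and maps the others to a basis of R/I.
So (id (x) pr) cM w = w (x) 1 means: for every standard monomial a avoiding
x_0..x_(m-i-1), the coefficient cM w a equals w if a = 1 and 0 otherwise.\<close>
definition invariant_G ::
  "nat \<Rightarrow> nat \<Rightarrow> nat \<Rightarrow> ('m::zero \<Rightarrow> (nat \<Rightarrow>\<^sub>0 nat) \<Rightarrow> 'm) \<Rightarrow> nat \<Rightarrow> 'm \<Rightarrow> bool" where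
  "invariant_G p n m cM i w \<longleftrightarrow>
     (\<forall>a. std_mono m (p ^ n) a \<longrightarrow> (\<forall>j < m - i. Poly_Mapping.lookup a j = 0) \<longrightarrow>
          cM w a = (if a = 0 then w else 0))"

definition in_tensor_R_sub :: "nat \<Rightarrow> ((nat \<Rightarrow>\<^sub>0 nat) \<Rightarrow> 'm::zero) \<Rightarrow> nat \<Rightarrow> bool" where
  "in_tensor_R_sub m f i \<longleftrightarrow> (\<forall>a. (\<exists>j. m - i < j \<and> Poly_Mapping.lookup a j \<noteq> 0) \<longrightarrow> f a = 0)"

end

theory Submission
  imports Defs
begin

text \<open>Setting the variables y_k, k \<noteq> j, of the second tensor factor to zero turns the Witt sum
S_nu(x, y) into x_nu for nu < j and into x_j + y_j for nu = j. Hence, for monomials x^a not involving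
any x_k with k > j, the coefficient of x^c \<otimes> x_j^s in Delta(x^a) is (a_j choose c_j) if
a = c + s e_j and 0 otherwise. If c_M(v) only involves x_0, ..., x_j, coassociativity therefore
makes the x^c-coefficient of c_M(w), w the x_j^s-coefficient of c_M(v), a multiple of the
(x^c x_j^s)-coefficient of c_M(v). For j > m - i, G_(i-1)-invariance of v kills these w, so a
downward induction on j shows c_M(v) \<in> M \<otimes> R_i; for j = m - i and s maximal the same identity
shows that w is G_i-invariant.\<close>

definition kill_vars :: "nat set \<Rightarrow> 'a::zero mpoly \<Rightarrow> 'a mpoly" where
  "kill_vars K = Poly_Mapping.mapp (\<lambda>mu c. c when (\<forall>x\<in>K. Poly_Mapping.lookup mu x = 0))"

lemma lookup_kill_vars:
  "Poly_Mapping.lookup (kill_vars K P) mu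
    = (Poly_Mapping.lookup P mu when (\<forall>x\<in>K. Poly_Mapping.lookup mu x = 0))"
  by (auto simp: kill_vars_def lookup_mapp when_def in_keys_iff)

lemma lookup_mult_pairs:
  "Poly_Mapping.lookup (P * Q) k
    = (\<Sum>(a, b). Poly_Mapping.lookup P a * Poly_Mapping.lookup Q b when k = a + b)"
  unfolding lookup_mult prod_fun_def[symmetric]
  by (rule prod_fun_unfold_prod) auto

lemma kill_vars_add: "kill_vars K (P + Q) = kill_vars K P + kill_vars K Q"
  by (rule poly_mapping_eqI) (simp add: lookup_kill_vars lookup_add when_add_distrib)

lemma kill_vars_diff: "kill_vars K (P - Q) = kill_vars K P - kill_vars K (Q :: 'a::ab_group_add mpoly)"
  by (rule poly_mapping_eqI) (simp add: lookup_kill_vars lookup_minus when_diff_distrib)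

lemma kill_vars_zero: "kill_vars K 0 = 0"
  by (rule poly_mapping_eqI) (simp add: lookup_kill_vars)

lemma kill_vars_sum: "kill_vars K (\<Sum>i\<in>A. f i) = (\<Sum>i\<in>A. kill_vars K (f i))"
  by (induct A rule: infinite_finite_induct) (simp_all add: kill_vars_zero kill_vars_add)

lemma kill_vars_one: "kill_vars K 1 = (1 :: 'a::comm_semiring_1 mpoly)"
  by (rule poly_mapping_eqI) (auto simp: lookup_kill_vars lookup_one when_def)

lemma kill_vars_mult:
  "kill_vars K (P * Q) = kill_vars K P * kill_vars K (Q :: 'a::comm_semiring_1 mpoly)"
proof (rule poly_mapping_eqI)
  fix k :: "nat \<Rightarrow>\<^sub>0 nat"
  have "((Poly_Mapping.lookup P a when (\<forall>x\<in>K. Poly_Mapping.lookup a x = 0))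
          * (Poly_Mapping.lookup Q b when (\<forall>x\<in>K. Poly_Mapping.lookup b x = 0)) when k = a + b)
     = ((Poly_Mapping.lookup P a * Poly_Mapping.lookup Q b when k = a + b)
          when (\<forall>x\<in>K. Poly_Mapping.lookup k x = 0))" for a b
    by (auto simp: when_def lookup_add)
  then show "Poly_Mapping.lookup (kill_vars K (P * Q)) k
      = Poly_Mapping.lookup (kill_vars K P * kill_vars K Q) k"
    by (simp add: lookup_kill_vars lookup_mult_pairs case_prod_unfold flip: Sum_any_when_independent)
qed

lemma kill_vars_power: "kill_vars K (P ^ e) = kill_vars K (P :: 'a::comm_semiring_1 mpoly) ^ e"
  by (induct e) (simp_all add: kill_vars_one kill_vars_mult)

lemma kill_vars_prod:
  "kill_vars K (\<Prod>i\<in>A. f i) = (\<Prod>i\<in>A. kill_vars K (f i :: 'a::comm_semiring_1 mpoly))"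
  by (induct A rule: infinite_finite_induct) (simp_all add: kill_vars_one kill_vars_mult)

lemma kill_vars_of_nat: "kill_vars K (of_nat c) = (of_nat c :: 'a::comm_semiring_1 mpoly)"
  by (rule poly_mapping_eqI) (auto simp: lookup_kill_vars lookup_of_nat when_def)

lemma kill_vars_var: "kill_vars K (mp_var x) = (if x \<in> K then 0 else mp_var x)"
  by (rule poly_mapping_eqI) (auto simp: lookup_kill_vars mp_var_def lookup_single when_def)

lemma lookup_map_zero_preserving:
  "f 0 = 0 \<Longrightarrow> Poly_Mapping.lookup (Poly_Mapping.map f P) mu = f (Poly_Mapping.lookup P mu)"
  by (auto simp: map.rep_eq when_def)

lemma kill_vars_map:
  "f 0 = 0 \<Longrightarrow> kill_vars K (Poly_Mapping.map f P) = Poly_Mapping.map f (kill_vars K P)"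
  by (rule poly_mapping_eqI) (auto simp: lookup_map_zero_preserving lookup_kill_vars when_def)

lemma length_witt_add_list: "length (witt_add_list p nu) = nu"
  by (induct nu) (simp_all add: Let_def)

lemma nth_witt_add_list: "i < nu \<Longrightarrow> witt_add_list p nu ! i = witt_add p i"
proof (induct nu)
  case (Suc nu)
  then show ?case
    by (cases "i = nu") (simp_all add: Let_def nth_append length_witt_add_list witt_add_def)
qed simp

lemma witt_add_rec: "witt_add p nu = mp_cdiv (int p ^ nu)
  ((\<Sum>i\<le>nu. of_nat (p ^ i) * (witt_X i ^ (p ^ (nu - i)) + witt_Y i ^ (p ^ (nu - i))))
   - (\<Sum>i<nu. of_nat (p ^ i) * witt_add p i ^ (p ^ (nu - i))))"
proof -
  have "(\<Sum>i<nu. of_nat (p ^ i) * (witt_add_list p nu ! i) ^ (p ^ (nu - i)) :: int mpoly)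
      = (\<Sum>i<nu. of_nat (p ^ i) * witt_add p i ^ (p ^ (nu - i)))"
    by (rule sum.cong) (simp_all add: nth_witt_add_list)
  then show ?thesis
    by (simp add: witt_add_def Let_def nth_append length_witt_add_list)
qed

lemma mp_cdiv_of_nat_mult: "c \<noteq> 0 \<Longrightarrow> mp_cdiv (int c) (of_nat c * P) = P"
  by (rule poly_mapping_eqI)
    (simp add: mp_cdiv_def lookup_map_zero_preserving flip: single_of_nat mult_map_scale_conv_mult)

text \<open>In the recursion defining S_nu, once y_0, ..., y_(nu-1) vanish, only the term p^nu y_nu
still involves y.\<close>

lemma kill_vars_witt_add:
  assumes "p > 0" and "\<forall>k<j. Suc (2 * k) \<in> K" and "nu \<le> j"
  shows "kill_vars K (witt_add p nu) = kill_vars K (witt_X nu + witt_Y nu)"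
  using \<open>nu \<le> j\<close>
proof (induction nu rule: less_induct)
  case (less nu)
  define X where "X i = kill_vars K (witt_X i)" for i
  have Y_killed: "kill_vars K (witt_Y i) = 0" if "i < nu" for i
    using that less.prems assms(2) by (simp add: witt_Y_def kill_vars_var)
  have IH: "kill_vars K (witt_add p i) = X i" if "i < nu" for i
    using less.IH[of i] that less.prems Y_killed[OF that] by (simp add: X_def kill_vars_add)
  let ?lower = "\<Sum>i<nu. of_nat (p ^ i) * X i ^ (p ^ (nu - i)) :: int mpoly"
  have num: "kill_vars K
        (\<Sum>i\<le>nu. of_nat (p ^ i) * (witt_X i ^ (p ^ (nu - i)) + witt_Y i ^ (p ^ (nu - i))))
      = ?lower + of_nat (p ^ nu) * kill_vars K (witt_X nu + witt_Y nu)"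
    using assms(1)
    by (simp add: lessThan_Suc_atMost[symmetric] kill_vars_sum kill_vars_mult kill_vars_of_nat
        kill_vars_add kill_vars_power Y_killed X_def power_0_left)
  have sub: "kill_vars K (\<Sum>i<nu. of_nat (p ^ i) * witt_add p i ^ (p ^ (nu - i))) = ?lower"
    by (simp add: kill_vars_sum kill_vars_mult kill_vars_of_nat kill_vars_power IH)
  have "kill_vars K (witt_add p nu)
      = mp_cdiv (int p ^ nu) (of_nat (p ^ nu) * kill_vars K (witt_X nu + witt_Y nu))"
    by (subst witt_add_rec) (simp only: mp_cdiv_def kill_vars_map div_0 kill_vars_diff num sub
        add_diff_cancel_left')
  then show ?case
    using mp_cdiv_of_nat_mult[of "p ^ nu" "kill_vars K (witt_X nu + witt_Y nu)"] assms(1) by simp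
qed

lemma lookup_tensor_mono_even:
  "Poly_Mapping.lookup (tensor_mono m c b) (2 * x) = (if x < m then Poly_Mapping.lookup c x else 0)"
proof -
  have "Poly_Mapping.lookup (tensor_mono m c b) (2 * x)
      = (\<Sum>i<m. if i = x then Poly_Mapping.lookup c i else 0)"
    unfolding tensor_mono_def lookup_sum
    by (intro sum.cong)
      (auto simp: lookup_add lookup_single when_def Suc_double_not_eq_double double_not_eq_Suc_double)
  then show ?thesis by simp
qed

lemma lookup_tensor_mono_odd:
  "Poly_Mapping.lookup (tensor_mono m c b) (Suc (2 * x))
    = (if x < m then Poly_Mapping.lookup b x else 0)"
proof -
  have "Poly_Mapping.lookup (tensor_mono m c b) (Suc (2 * x))
      = (\<Sum>i<m. if i = x then Poly_Mapping.lookup b i else 0)"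
    unfolding tensor_mono_def lookup_sum
    by (intro sum.cong)
      (auto simp: lookup_add lookup_single when_def Suc_double_not_eq_double double_not_eq_Suc_double)
  then show ?thesis by simp
qed

lemma poly_mapping_eq_iff_even_odd:
  "P = Q \<longleftrightarrow> (\<forall>x. Poly_Mapping.lookup P (2 * x) = Poly_Mapping.lookup Q (2 * x)
      \<and> Poly_Mapping.lookup P (Suc (2 * x)) = Poly_Mapping.lookup Q (Suc (2 * x)))"
  by (metis oddE evenE poly_mapping_eqI Suc_eq_plus1)

lemma mp_var_power: "mp_var x ^ e = Poly_Mapping.single (Poly_Mapping.single x e) (1 :: 'a::comm_ring_1)"
  by (induct e) (simp_all add: mp_var_def mult_single single_add[symmetric] add.commute)

lemma prod_mp_var_power: "finite A \<Longrightarrow> (\<Prod>nu\<in>A. mp_var (g nu) ^ e nu)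
   = Poly_Mapping.single (\<Sum>nu\<in>A. Poly_Mapping.single (g nu) (e nu)) (1 :: 'a::comm_ring_1)"
  by (induct A rule: finite_induct) (simp_all add: mp_var_power mult_single)

lemma map_of_int_add:
  "Poly_Mapping.map (of_int :: int \<Rightarrow> 'a::ring_1) (P + Q)
    = Poly_Mapping.map of_int P + Poly_Mapping.map of_int Q"
  by (rule poly_mapping_eqI) (simp add: lookup_map_zero_preserving lookup_add)

lemma delta_coeff_kill_vars:
  assumes "\<forall>x\<in>K. Poly_Mapping.lookup mu x = 0"
  shows "(delta_coeff p m a mu :: 'k::field) = Poly_Mapping.lookup
     (\<Prod>nu<m. kill_vars K (Poly_Mapping.map of_int (witt_add p nu)) ^ Poly_Mapping.lookup a nu) mu"
proof -
  have "(delta_coeff p m a mu :: 'k) = Poly_Mapping.lookup (kill_vars K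
      (\<Prod>nu<m. Poly_Mapping.map of_int (witt_add p nu) ^ Poly_Mapping.lookup a nu)) mu"
    by (simp add: delta_coeff_def lookup_kill_vars assms)
  then show ?thesis by (simp only: kill_vars_prod kill_vars_power)
qed

lemma kill_other_y_witt_add:
  assumes "p > 0" and "nu \<le> j"
  shows "kill_vars {x. odd x \<and> x \<noteq> Suc (2 * j)} (Poly_Mapping.map of_int (witt_add p nu))
    = (if nu = j then mp_var (2 * j) + mp_var (Suc (2 * j)) else (mp_var (2 * nu) :: 'a::comm_ring_1 mpoly))"
proof -
  let ?K = "{x. odd x \<and> x \<noteq> Suc (2 * j)}"
  have "kill_vars ?K (witt_add p nu) = kill_vars ?K (witt_X nu + witt_Y nu)"
    using kill_vars_witt_add[OF assms(1) _ assms(2), of ?K] by simp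
  also have "\<dots> = (if nu = j then mp_var (2 * j) + mp_var (Suc (2 * j)) else mp_var (2 * nu))"
    by (simp add: kill_vars_add kill_vars_var witt_X_def witt_Y_def)
  finally show ?thesis
    by (simp add: kill_vars_map map_of_int_add mp_var_def)
qed

lemma monomial_eq_tensor_mono_single_iff:
  assumes "j < m" and "k \<le> Poly_Mapping.lookup a j"
    and a_le: "\<forall>k>j. Poly_Mapping.lookup a k = 0" and c_lt: "\<forall>k\<ge>m. Poly_Mapping.lookup c k = 0"
  shows "(\<Sum>nu\<in>{..<m} - {j}. Poly_Mapping.single (2 * nu) (Poly_Mapping.lookup a nu))
        + Poly_Mapping.single (2 * j) k + Poly_Mapping.single (Suc (2 * j)) (Poly_Mapping.lookup a j - k)
      = tensor_mono m c (Poly_Mapping.single j s)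
    \<longleftrightarrow> k = Poly_Mapping.lookup c j \<and> a = c + Poly_Mapping.single j s"
    (is "?E = ?mu \<longleftrightarrow> _")
proof -
  let ?t = "Poly_Mapping.lookup a j"
  have lE: "Poly_Mapping.lookup ?E (2 * x)
        = (if x < m \<and> x \<noteq> j then Poly_Mapping.lookup a x else 0) + (if x = j then k else 0)"
      "Poly_Mapping.lookup ?E (Suc (2 * x)) = (if x = j then ?t - k else 0)" for x
    by (auto simp: lookup_add lookup_sum lookup_single when_def sum.delta'
        Suc_double_not_eq_double double_not_eq_Suc_double)
  have lmu: "Poly_Mapping.lookup ?mu (2 * x) = (if x < m then Poly_Mapping.lookup c x else 0)"
      "Poly_Mapping.lookup ?mu (Suc (2 * x)) = (if x = j then s else 0)" for x
    using \<open>j < m\<close> by (simp_all add: lookup_tensor_mono_even lookup_tensor_mono_odd lookup_single when_def)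
  have "?E = ?mu \<longleftrightarrow> k = Poly_Mapping.lookup c j \<and> ?t - k = s
      \<and> (\<forall>x. x \<noteq> j \<longrightarrow> Poly_Mapping.lookup a x = Poly_Mapping.lookup c x)"
    unfolding poly_mapping_eq_iff_even_odd lE lmu
  proof (intro iffI conjI allI impI)
    assume H: "\<forall>x. (if x < m \<and> x \<noteq> j then Poly_Mapping.lookup a x else 0) + (if x = j then k else 0)
        = (if x < m then Poly_Mapping.lookup c x else 0)
      \<and> (if x = j then ?t - k else 0) = (if x = j then s else 0)"
    show "k = Poly_Mapping.lookup c j" and "?t - k = s"
      using H[rule_format, of j] \<open>j < m\<close> by auto
    fix x assume "x \<noteq> j"
    then show "Poly_Mapping.lookup a x = Poly_Mapping.lookup c x"
      using H[rule_format, of x] a_le c_lt \<open>j < m\<close> by (cases "x < m") auto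
  next
    fix x
    assume "k = Poly_Mapping.lookup c j \<and> ?t - k = s
      \<and> (\<forall>x. x \<noteq> j \<longrightarrow> Poly_Mapping.lookup a x = Poly_Mapping.lookup c x)"
    then show "(if x < m \<and> x \<noteq> j then Poly_Mapping.lookup a x else 0) + (if x = j then k else 0)
        = (if x < m then Poly_Mapping.lookup c x else 0)"
      and "(if x = j then ?t - k else 0) = (if x = j then s else 0)"
      using c_lt \<open>j < m\<close> by (auto simp del: diff_is_0_eq)
  qed
  then show ?thesis
    using \<open>k \<le> ?t\<close> unfolding poly_mapping_eq_iff fun_eq_iff
    by (auto simp: lookup_add lookup_single when_def)
qed

text \<open>Killing y_k for k \<noteq> j (the odd variables other than 2 j + 1) does not change the
coefficient at x^c \<otimes> x_j^s.\<close>

lemma delta_coeff_tensor_single: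
  assumes "p > 0" and "j < m"
    and a_le: "\<forall>k>j. Poly_Mapping.lookup a k = 0" and c_lt: "\<forall>k\<ge>m. Poly_Mapping.lookup c k = 0"
  shows "(delta_coeff p m a (tensor_mono m c (Poly_Mapping.single j s)) :: 'k::field)
     = (of_nat (Poly_Mapping.lookup a j choose Poly_Mapping.lookup c j) when a = c + Poly_Mapping.single j s)"
proof -
  define K where "K = {x. odd x \<and> x \<noteq> Suc (2 * j)}"
  define t where "t = Poly_Mapping.lookup a j"
  define E where "E k = (\<Sum>nu\<in>{..<m} - {j}. Poly_Mapping.single (2 * nu) (Poly_Mapping.lookup a nu))
    + Poly_Mapping.single (2 * j) k + Poly_Mapping.single (Suc (2 * j)) (t - k)" for k
  let ?mu = "tensor_mono m c (Poly_Mapping.single j s)"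
  have "\<forall>x\<in>K. Poly_Mapping.lookup ?mu x = 0"
    by (auto simp: K_def lookup_tensor_mono_odd lookup_single elim!: oddE)
  then have "(delta_coeff p m a ?mu :: 'k) = Poly_Mapping.lookup
      (\<Prod>nu<m. kill_vars K (Poly_Mapping.map of_int (witt_add p nu)) ^ Poly_Mapping.lookup a nu) ?mu"
    by (rule delta_coeff_kill_vars)
  also have "(\<Prod>nu<m. kill_vars K (Poly_Mapping.map of_int (witt_add p nu)) ^ Poly_Mapping.lookup a nu)
      = (\<Prod>nu<m. (if nu = j then mp_var (2 * j) + mp_var (Suc (2 * j)) else (mp_var (2 * nu) :: 'k mpoly))
            ^ Poly_Mapping.lookup a nu)"
  proof (rule prod.cong)
    fix nu
    show "kill_vars K (Poly_Mapping.map of_int (witt_add p nu)) ^ Poly_Mapping.lookup a nu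
      = (if nu = j then mp_var (2 * j) + mp_var (Suc (2 * j)) else (mp_var (2 * nu) :: 'k mpoly))
          ^ Poly_Mapping.lookup a nu"
      using a_le kill_other_y_witt_add[OF \<open>p > 0\<close>, of nu j, where 'a = 'k]
      by (cases "nu \<le> j") (auto simp: K_def)
  qed simp
  also have "\<dots> = (\<Prod>nu\<in>{..<m} - {j}. mp_var (2 * nu) ^ Poly_Mapping.lookup a nu)
      * (mp_var (2 * j) + mp_var (Suc (2 * j))) ^ t"
    using \<open>j < m\<close> by (simp add: prod.remove[of "{..<m}" j] t_def mult.commute)
  also have "\<dots> = (\<Sum>k\<le>t. Poly_Mapping.single (E k) (of_nat (t choose k)))"
    by (subst prod_mp_var_power)
      (simp_all add: E_def binomial_ring mp_var_power mult_single sum_distrib_left add.assoc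
        flip: single_of_nat)
  finally have "(delta_coeff p m a ?mu :: 'k) = (\<Sum>k\<le>t. of_nat (t choose k) when E k = ?mu)"
    by (simp add: lookup_sum lookup_single)
  also have "\<dots> = (\<Sum>k\<le>t. of_nat (t choose k)
      when k = Poly_Mapping.lookup c j \<and> a = c + Poly_Mapping.single j s)"
    using monomial_eq_tensor_mono_single_iff[OF \<open>j < m\<close> _ a_le c_lt]
    by (intro sum.cong refl) (simp add: E_def t_def)
  finally show ?thesis
    by (auto simp: when_def t_def lookup_add intro!: sum.neutral)
qed

lemma std_mono_add_left: "std_mono m N (a + b) \<Longrightarrow> std_mono m N a"
  unfolding std_mono_def lookup_add by (metis add_is_0 add_lessD1)

lemma std_mono_add_right: "std_mono m N (a + b) \<Longrightarrow> std_mono m N b"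
  using std_mono_add_left[of m N b a] by (simp add: add.commute)

lemma finite_std_mono: "finite {a. std_mono m N a}"
proof -
  have "Poly_Mapping.lookup a \<in> {f. \<forall>x. (x \<in> {..<m} \<longrightarrow> f x \<in> {..<N}) \<and> (x \<notin> {..<m} \<longrightarrow> f x = 0)}"
    if "std_mono m N a" for a
    using that unfolding std_mono_def by (auto simp: not_less leD)
  then have "finite (Poly_Mapping.lookup ` {a. std_mono m N a})"
    by (intro finite_subset[OF _ finite_set_of_finite_funs[of "{..<m}" "{..<N}" 0]] image_subsetI)
      simp_all
  then show ?thesis
    by (rule finite_imageD) (simp add: inj_on_def lookup_inject)
qed

definition vanishes_above :: "nat \<Rightarrow> ((nat \<Rightarrow>\<^sub>0 nat) \<Rightarrow> 'm::zero) \<Rightarrow> bool" where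
  "vanishes_above j f \<longleftrightarrow> (\<forall>a. (\<exists>k>j. Poly_Mapping.lookup a k \<noteq> 0) \<longrightarrow> f a = 0)"

lemma comodule_off_std:
  "is_comodule scale p n m cM \<Longrightarrow> \<not> std_mono m (p ^ n) a \<Longrightarrow> cM u a = 0"
  unfolding is_comodule_def by blast

lemma comodule_counit: "is_comodule scale p n m cM \<Longrightarrow> cM u 0 = u"
  unfolding is_comodule_def by blast

lemma comodule_zero:
  assumes "is_comodule scale p n m cM"
  shows "cM 0 a = 0"
proof -
  have "cM (0 + 0) a = cM 0 a + cM 0 a"
    using assms unfolding is_comodule_def by blast
  then show ?thesis by simp
qed

lemma comodule_coassoc_single:
  fixes scale :: "'k::field \<Rightarrow> 'm::ab_group_add \<Rightarrow> 'm"
  assumes comod: "is_comodule scale p n m cM" and "vector_space scale" and "p > 0" and "j < m"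
    and van: "vanishes_above j (cM v)"
  shows "cM (cM v (Poly_Mapping.single j s)) c
    = scale (of_nat (Poly_Mapping.lookup c j + s choose Poly_Mapping.lookup c j))
        (cM v (c + Poly_Mapping.single j s))"
proof -
  interpret vector_space scale by fact
  let ?std = "std_mono m (p ^ n)" and ?b = "Poly_Mapping.single j s"
  let ?binom = "of_nat (Poly_Mapping.lookup c j + s choose Poly_Mapping.lookup c j) :: 'k"
  have coassoc: "?std b \<Longrightarrow> ?std c \<Longrightarrow>
      cM (cM u b) c = (\<Sum>a\<in>{a. ?std a}. scale (delta_coeff p m a (tensor_mono m c b)) (cM u a))" for u b
    using comod unfolding is_comodule_def by blast
  show ?thesis
  proof (cases "?std ?b \<and> ?std c")
    case std: True
    have "cM (cM v ?b) c = (\<Sum>a\<in>{a. ?std a}. scale (delta_coeff p m a (tensor_mono m c ?b)) (cM v a))"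
      using std by (simp add: coassoc)
    also have "\<dots> = (\<Sum>a\<in>{a. ?std a}. if a = c + ?b then scale ?binom (cM v (c + ?b)) else 0)"
    proof (rule sum.cong)
      fix a assume "a \<in> {a. ?std a}"
      show "scale (delta_coeff p m a (tensor_mono m c ?b)) (cM v a)
          = (if a = c + ?b then scale ?binom (cM v (c + ?b)) else 0)"
      proof (cases "\<exists>k>j. Poly_Mapping.lookup a k \<noteq> 0")
        case True
        then have "cM v a = 0"
          using van by (simp add: vanishes_above_def)
        then show ?thesis by auto
      next
        case False
        have "\<forall>k\<ge>m. Poly_Mapping.lookup c k = 0"
          using std by (auto simp: std_mono_def leD)
        then have "delta_coeff p m a (tensor_mono m c ?b)
            = (of_nat (Poly_Mapping.lookup a j choose Poly_Mapping.lookup c j) when a = c + ?b)"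
          using False \<open>p > 0\<close> \<open>j < m\<close> by (intro delta_coeff_tensor_single) auto
        then show ?thesis
          by (auto simp: when_def lookup_add)
      qed
    qed simp
    also have "\<dots> = scale ?binom (cM v (c + ?b))"
      using finite_std_mono[of m "p ^ n"] by (auto simp: comodule_off_std[OF comod])
    finally show ?thesis .
  next
    case False
    then have "\<not> ?std (c + ?b)"
      using std_mono_add_left std_mono_add_right by blast
    then show ?thesis
      using False by (auto simp: comodule_off_std[OF comod] comodule_zero[OF comod])
  qed
qed

lemma vanishes_above_Suc_imp_vanishes_above:
  fixes scale :: "'k::field \<Rightarrow> 'm::ab_group_add \<Rightarrow> 'm"
  assumes comod: "is_comodule scale p n m cM" and vs: "vector_space scale" and "p > 0"
    and van: "vanishes_above (Suc j) (cM v)"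
    and no_pure: "\<forall>s>0. cM v (Poly_Mapping.single (Suc j) s) = 0"
  shows "vanishes_above j (cM v)"
  unfolding vanishes_above_def
proof (intro allI impI)
  interpret vector_space scale by fact
  fix a :: "nat \<Rightarrow>\<^sub>0 nat" assume "\<exists>k>j. Poly_Mapping.lookup a k \<noteq> 0"
  then obtain k where "j < k" "Poly_Mapping.lookup a k \<noteq> 0" by blast
  show "cM v a = 0"
  proof (cases "(\<exists>k>Suc j. Poly_Mapping.lookup a k \<noteq> 0) \<or> \<not> std_mono m (p ^ n) a")
    case True
    then show ?thesis
      using van comodule_off_std[OF comod] by (auto simp: vanishes_above_def)
  next
    case False
    define s where "s = Poly_Mapping.lookup a (Suc j)"
    define c where "c = a - Poly_Mapping.single (Suc j) s"
    have "k = Suc j"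
      using False \<open>j < k\<close> \<open>Poly_Mapping.lookup a k \<noteq> 0\<close> Suc_lessI by blast
    then have "s > 0"
      using \<open>Poly_Mapping.lookup a k \<noteq> 0\<close> by (simp add: s_def)
    then have "Suc j < m"
      using False unfolding s_def std_mono_def by (metis not_gr0)
    have "a = c + Poly_Mapping.single (Suc j) s" and "Poly_Mapping.lookup c (Suc j) = 0"
      by (auto intro!: poly_mapping_eqI simp: c_def s_def lookup_add lookup_minus lookup_single when_def)
    then have "cM v a = cM (cM v (Poly_Mapping.single (Suc j) s)) c"
      using comodule_coassoc_single[OF comod vs \<open>p > 0\<close> \<open>Suc j < m\<close> van, of s c] by simp
    also have "\<dots> = 0"
      using no_pure \<open>s > 0\<close> by (simp add: comodule_zero[OF comod])
    finally show ?thesis .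
  qed
qed

lemma invariant_imp_vanishes_above:
  fixes scale :: "'k::field \<Rightarrow> 'm::ab_group_add \<Rightarrow> 'm"
  assumes comod: "is_comodule scale p n m cM" and vs: "vector_space scale" and "p > 0"
    and inv: "invariant_G p n m cM i v"
  shows "vanishes_above (m - Suc i) (cM v)"
proof -
  have "m - Suc i \<le> m" by simp
  then show ?thesis
  proof (induction rule: inc_induct[where P = "\<lambda>j. vanishes_above j (cM v)"])
    case base
    show ?case
      by (auto simp: vanishes_above_def std_mono_def intro!: comodule_off_std[OF comod])
        (use less_asym in blast)
  next
    case (step j)
    have "cM v (Poly_Mapping.single (Suc j) s) = 0" if "s > 0" for s
    proof (cases "std_mono m (p ^ n) (Poly_Mapping.single (Suc j) s)")
      case True
      moreover have "\<forall>k<m - i. Poly_Mapping.lookup (Poly_Mapping.single (Suc j) s) k = 0"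
        using step by (simp add: lookup_single when_def)
      moreover have "Poly_Mapping.single (Suc j) s \<noteq> 0"
        using \<open>s > 0\<close> lookup_single_eq[of "Suc j" s] by force
      ultimately show ?thesis
        using inv by (simp add: invariant_G_def)
    qed (rule comodule_off_std[OF comod])
    then show ?case
      using vanishes_above_Suc_imp_vanishes_above[OF comod vs \<open>p > 0\<close> \<open>vanishes_above (Suc j) (cM v)\<close>]
      by blast
  qed
qed

lemma top_coefficient_invariant:
  fixes scale :: "'k::field \<Rightarrow> 'm::ab_group_add \<Rightarrow> 'm"
  assumes comod: "is_comodule scale p n m cM" and vs: "vector_space scale" and "p > 0" and "r < m"
    and van: "vanishes_above r (cM v)"
    and top: "\<forall>s>J. cM v (Poly_Mapping.single r s) = 0"
  shows "invariant_G p n m cM (m - r) (cM v (Poly_Mapping.single r J))"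
  unfolding invariant_G_def
proof (intro allI impI)
  interpret vector_space scale by fact
  fix c assume "std_mono m (p ^ n) c" and low: "\<forall>k<m - (m - r). Poly_Mapping.lookup c k = 0"
  have "cM (cM v (Poly_Mapping.single r J)) c
      = scale (of_nat (Poly_Mapping.lookup c r + J choose Poly_Mapping.lookup c r))
          (cM v (c + Poly_Mapping.single r J))"
    by (rule comodule_coassoc_single[OF comod vs \<open>p > 0\<close> \<open>r < m\<close> van])
  moreover have "cM v (c + Poly_Mapping.single r J) = 0" if "c \<noteq> 0"
  proof (cases "\<exists>k>r. Poly_Mapping.lookup c k \<noteq> 0")
    case True
    then obtain k where "k > r" "Poly_Mapping.lookup (c + Poly_Mapping.single r J) k \<noteq> 0"
      by (auto simp: lookup_add)
    then show ?thesis
      using van by (auto simp: vanishes_above_def)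
  next
    case False
    then have "c = Poly_Mapping.single r (Poly_Mapping.lookup c r)"
      using low \<open>r < m\<close> by (intro poly_mapping_eqI) (auto simp: lookup_single when_def neq_iff)
    then have "c + Poly_Mapping.single r J = Poly_Mapping.single r (Poly_Mapping.lookup c r + J)"
      by (metis single_add)
    moreover have "Poly_Mapping.lookup c r + J > J"
      using \<open>c \<noteq> 0\<close> \<open>c = Poly_Mapping.single r (Poly_Mapping.lookup c r)\<close>
      by (metis add.commute less_add_same_cancel1 neq0_conv single_zero)
    ultimately show ?thesis
      using top by simp
  qed
  ultimately show "cM (cM v (Poly_Mapping.single r J)) c
      = (if c = 0 then cM v (Poly_Mapping.single r J) else 0)"
    by auto
qed

lemma max_pure_coefficient:
  fixes r :: nat
  assumes comod: "is_comodule scale p n m cM" and "v \<noteq> 0"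
  defines "J \<equiv> Max {j. cM v (Poly_Mapping.single r j) \<noteq> 0}"
  shows "cM v (Poly_Mapping.single r J) \<noteq> 0" and "\<forall>s>J. cM v (Poly_Mapping.single r s) = 0"
proof -
  define Js where "Js = {j. cM v (Poly_Mapping.single r j) \<noteq> 0}"
  have "Js \<subseteq> {..<p ^ n}"
  proof
    fix j assume "j \<in> Js"
    then have "std_mono m (p ^ n) (Poly_Mapping.single r j)"
      using comodule_off_std[OF comod] by (auto simp: Js_def)
    then show "j \<in> {..<p ^ n}"
      unfolding std_mono_def by (metis lookup_single_eq lessThan_iff)
  qed
  then have "finite Js" by (rule finite_subset) simp
  moreover have "0 \<in> Js"
    using comodule_counit[OF comod] \<open>v \<noteq> 0\<close> by (simp add: Js_def)
  ultimately have "J \<in> Js" and "\<forall>s>J. s \<notin> Js"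
    unfolding J_def Js_def[symmetric] by (auto intro: Max_in dest: Max_ge)
  then show "cM v (Poly_Mapping.single r J) \<noteq> 0" and "\<forall>s>J. cM v (Poly_Mapping.single r s) = 0"
    by (simp_all add: Js_def)
qed

theorem mainTheorem10:
  fixes scale :: "'k::field \<Rightarrow> 'm::ab_group_add \<Rightarrow> 'm"
    and p n m i :: nat
    and cM :: "'m \<Rightarrow> (nat \<Rightarrow>\<^sub>0 nat) \<Rightarrow> 'm"
    and v :: 'm
  assumes "prime p" and "CHAR('k) = p"
    and "n \<ge> 1" and "m \<ge> 1"
    and "vector_space scale"
    and "\<exists>B. finite_dimensional_vector_space scale B"
    and "is_comodule scale p n m cM"
    and "1 \<le> i" and "i \<le> m"
    and "v \<noteq> 0" and "invariant_G p n m cM (i - 1) v"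
  shows "in_tensor_R_sub m (cM v) i \<and>
    (let j = Max {j. cM v (Poly_Mapping.single (m - i) j) \<noteq> 0};
         w = cM v (Poly_Mapping.single (m - i) j)
     in w \<noteq> 0 \<and> invariant_G p n m cM i w)"
proof -
  note comod = \<open>is_comodule scale p n m cM\<close> and vs = \<open>vector_space scale\<close>
  have "p > 0" using \<open>prime p\<close> by (simp add: prime_gt_0_nat)
  have van: "vanishes_above (m - i) (cM v)"
    using invariant_imp_vanishes_above[OF comod vs \<open>p > 0\<close> \<open>invariant_G p n m cM (i - 1) v\<close>]
      \<open>1 \<le> i\<close> by simp
  define J where "J = Max {j. cM v (Poly_Mapping.single (m - i) j) \<noteq> 0}"
  have "m - i < m" and "m - (m - i) = i"
    using \<open>1 \<le> i\<close> \<open>i \<le> m\<close> by auto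
  moreover note top = max_pure_coefficient[OF comod \<open>v \<noteq> 0\<close>, of "m - i", folded J_def]
  ultimately have "invariant_G p n m cM i (cM v (Poly_Mapping.single (m - i) J))"
    using top_coefficient_invariant[OF comod vs \<open>p > 0\<close> _ van top(2)] by simp
  moreover have "in_tensor_R_sub m (cM v) i"
    using van by (simp add: in_tensor_R_sub_def vanishes_above_def)
  ultimately show ?thesis
    using top(1) unfolding Let_def J_def[symmetric] by blast
qed

end
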